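(* Let $m<p<p_F(\sigma)=m+\frac{\sigma+2}{N}$ and $Z_0=\frac{(\sigma+2)[m(N+\sigma)-p(N-2)]}{(p-m)^2}$. (i) If a trajectory $(x,y,z)(\eta_1)$ of system (S2) with $z\ge0$ crosses the plane $\{y=-\frac{\sigma+2}{p-m}\}$ from $\{y>-\frac{\sigma+2}{p-m}\}$ into $\{y<-\frac{\sigma+2}{p-m}\}$ at some time, then it remains in $\{y<-\frac{\sigma+2}{p-m}\}$ for all later times. (ii) If a trajectory satisfies $y(\eta_{1,*})=-\frac{\sigma+2}{p-m}$ and $\dot y(\eta_{1,*})=0$ for some $\eta_{1,*}$, then it is contained in the invariant line $\{y=-\frac{\sigma+2}{p-m},\ z=Z_0\}$; in particular no other trajectory is tangent to the plane $\{y=-\frac{\sigma+2}{p-m}\}$.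
   Context: Let $N\geq1$, $m>1$, $\sigma>0$. System (S2) is $$\dot x=x(2-(m-1)y),\quad \dot y=-x-(N-2)y+z-my^2-\tfrac{p-m}{\sigma+2}xy,\quad \dot z=z(\sigma+2+(p-m)y),$$ considered for $x\ge0$, $z\ge0$. *)

theory Defs
  imports "HOL-Analysis.Analysis"
begin

definition S2_traj ::
  "nat \<Rightarrow> real \<Rightarrow> real \<Rightarrow> real \<Rightarrow> real set \<Rightarrow>
   (real \<Rightarrow> real) \<Rightarrow> (real \<Rightarrow> real) \<Rightarrow> (real \<Rightarrow> real) \<Rightarrow> bool" where
  "S2_traj N m p \<sigma> I x y z \<longleftrightarrow>
     is_interval I \<and> open I \<and> I \<noteq> {} \<and>
     (\<forall>t\<in>I. x t \<ge> 0 \<and> z t \<ge> 0) \<and>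
     (\<forall>t\<in>I.
        (x has_real_derivative x t * (2 - (m - 1) * y t)) (at t) \<and>
        (y has_real_derivative
           (- x t - (real N - 2) * y t + z t - m * (y t)\<^sup>2
            - (p - m) / (\<sigma> + 2) * x t * y t)) (at t) \<and>
        (z has_real_derivative z t * (\<sigma> + 2 + (p - m) * y t)) (at t))"

end

(* The x-terms of the y-equation, - x (1 + (p - m) y / (sigma + 2)), vanish on the plane y = Y0,
   so y' = (z - Z0) - (y - Y0) K with K continuous along the trajectory; also z' = (p - m) z (y - Y0).
   Hence the squared distance V = (y - Y0)^2 + (z - Z0)^2 to the line {y = Y0, z = Z0} satisfies
   |V'| <= L V with L continuous, and a Gronwall argument shows that a trajectory meeting this
   line never leaves it; a tangency to the plane (y = Y0, y' = 0) forces z = Z0, i.e. such a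
   meeting.  After a downward crossing, y' <= 0 there gives z <= Z0, and z is nonincreasing as
   long as y < Y0.  At a first return to the plane y' = z - Z0 <= 0, while arriving from below
   gives y' >= 0; so the return is a tangency, and the trajectory would lie on the line. *)
theory Submission
  imports Defs
begin

lemma gronwall_zero_forward:
  fixes V V' :: "real \<Rightarrow> real" and M :: real
  assumes "a \<le> b" and "V a = 0"
    and nonneg: "\<And>s. s \<in> {a..b} \<Longrightarrow> 0 \<le> V s"
    and deriv: "\<And>s. s \<in> {a..b} \<Longrightarrow> (V has_real_derivative V' s) (at s)"
    and bound: "\<And>s. s \<in> {a..b} \<Longrightarrow> \<bar>V' s\<bar> \<le> M * V s"
  shows "V b = 0"
proof -
  let ?W = "\<lambda>s. V s * exp (- M * s)"
  have "?W b \<le> ?W a"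
  proof (rule DERIV_nonpos_imp_nonincreasing[OF \<open>a \<le> b\<close>])
    fix s assume "a \<le> s" "s \<le> b"
    then have s: "s \<in> {a..b}" by simp
    have "(?W has_real_derivative (V' s - M * V s) * exp (- M * s)) (at s)"
      using deriv[OF s] by (auto intro!: derivative_eq_intros simp: algebra_simps)
    moreover have "(V' s - M * V s) * exp (- M * s) \<le> 0"
      using bound[OF s] by (intro mult_nonpos_nonneg) auto
    ultimately show "\<exists>D. (?W has_real_derivative D) (at s) \<and> D \<le> 0" by blast
  qed
  then have "V b \<le> 0" using \<open>V a = 0\<close> by (simp add: mult_le_0_iff)
  then show ?thesis using nonneg[of b] \<open>a \<le> b\<close> by simp
qed

lemma gronwall_zero_backward:
  fixes V V' :: "real \<Rightarrow> real" and M :: real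
  assumes "a \<le> b" and "V b = 0"
    and nonneg: "\<And>s. s \<in> {a..b} \<Longrightarrow> 0 \<le> V s"
    and deriv: "\<And>s. s \<in> {a..b} \<Longrightarrow> (V has_real_derivative V' s) (at s)"
    and bound: "\<And>s. s \<in> {a..b} \<Longrightarrow> \<bar>V' s\<bar> \<le> M * V s"
  shows "V a = 0"
proof -
  have "(\<lambda>s. V (- s)) (- a) = 0"
  proof (rule gronwall_zero_forward[where a = "- b" and b = "- a" and V = "\<lambda>s. V (- s)"
        and V' = "\<lambda>s. - V' (- s)" and M = M])
    show "- b \<le> - a" using \<open>a \<le> b\<close> by simp
    show "V (- (- b)) = 0" using \<open>V b = 0\<close> by simp
  next
    fix s assume "s \<in> {- b..- a}"
    then have "- s \<in> {a..b}" by auto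
    show "((\<lambda>s. V (- s)) has_real_derivative - V' (- s)) (at s)"
      using DERIV_chain2[OF deriv[OF \<open>- s \<in> {a..b}\<close>] DERIV_minus[OF DERIV_ident]] by simp
    show "0 \<le> V (- s)" using nonneg[OF \<open>- s \<in> {a..b}\<close>] .
    show "\<bar>- V' (- s)\<bar> \<le> M * V (- s)" using bound[OF \<open>- s \<in> {a..b}\<close>] by simp
  qed
  then show ?thesis by simp
qed

lemma gronwall_zero_on_interval:
  fixes V V' L :: "real \<Rightarrow> real"
  assumes "is_interval I" and "\<eta> \<in> I" and "V \<eta> = 0" and "t \<in> I"
    and nonneg: "\<And>s. s \<in> I \<Longrightarrow> 0 \<le> V s"
    and deriv: "\<And>s. s \<in> I \<Longrightarrow> (V has_real_derivative V' s) (at s)"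
    and bound: "\<And>s. s \<in> I \<Longrightarrow> \<bar>V' s\<bar> \<le> L s * V s"
    and "continuous_on I L"
  shows "V t = 0"
proof -
  define J where "J = {min \<eta> t..max \<eta> t}"
  have "min \<eta> t \<in> I" "max \<eta> t \<in> I"
    using \<open>\<eta> \<in> I\<close> \<open>t \<in> I\<close> by (simp_all add: min_def max_def)
  then have "J \<subseteq> I"
    unfolding J_def using mem_is_interval_1_I[OF \<open>is_interval I\<close>] by (meson atLeastAtMost_iff subsetI)
  moreover have "J \<noteq> {}" by (simp add: J_def le_max_iff_disj)
  ultimately obtain s0 where max_L: "\<And>s. s \<in> J \<Longrightarrow> L s \<le> L s0"
    using continuous_attains_sup[of J L] continuous_on_subset[OF \<open>continuous_on I L\<close>]
    unfolding J_def by blast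
  have J_props: "0 \<le> V s" "(V has_real_derivative V' s) (at s)" "\<bar>V' s\<bar> \<le> L s0 * V s"
    if "s \<in> J" for s
  proof -
    have "s \<in> I" using that \<open>J \<subseteq> I\<close> by blast
    then show "0 \<le> V s" "(V has_real_derivative V' s) (at s)" by (fact nonneg deriv)+
    show "\<bar>V' s\<bar> \<le> L s0 * V s"
      using order_trans[OF bound mult_right_mono[OF max_L nonneg]] \<open>s \<in> I\<close> that by blast
  qed
  show ?thesis
  proof (cases "\<eta> \<le> t")
    case True
    then have "J = {\<eta>..t}" by (simp add: J_def)
    show ?thesis
      by (rule gronwall_zero_forward[where V = V, OF True \<open>V \<eta> = 0\<close>])
        (fact J_props[unfolded \<open>J = {\<eta>..t}\<close>])+
  next
    case False
    then have "J = {t..\<eta>}" by (simp add: J_def)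
    show ?thesis
      by (rule gronwall_zero_backward[where V = V, OF _ \<open>V \<eta> = 0\<close>])
        (use False in simp, (fact J_props[unfolded \<open>J = {t..\<eta>}\<close>])+)
  qed
qed

lemma abs_cross_terms_le:
  fixes a b K q :: real
  assumes "0 \<le> q"
  shows "\<bar>2*a*b - 2*a\<^sup>2*K + 2*q*a*b\<bar> \<le> (1 + q + 2*\<bar>K\<bar>) * (a\<^sup>2 + b\<^sup>2)"
proof -
  have ab: "\<bar>2*a*b\<bar> \<le> a\<^sup>2 + b\<^sup>2"
    using sum_squares_bound[of "\<bar>a\<bar>" "\<bar>b\<bar>"] by (simp add: abs_mult)
  have "2*q*a*b = q*(2*a*b)" by simp
  then have "\<bar>2*a*b - 2*a\<^sup>2*K + 2*q*a*b\<bar> \<le> \<bar>2*a*b\<bar> + \<bar>2*a\<^sup>2*K\<bar> + \<bar>q*(2*a*b)\<bar>"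
    using order_trans[OF abs_triangle_ineq add_right_mono[OF abs_triangle_ineq4]] by simp
  also have "\<dots> = \<bar>2*a*b\<bar> + 2*a\<^sup>2*\<bar>K\<bar> + q*\<bar>2*a*b\<bar>"
    using assms by (simp add: abs_mult)
  also have "\<dots> \<le> (a\<^sup>2 + b\<^sup>2) + 2*(a\<^sup>2 + b\<^sup>2)*\<bar>K\<bar> + q*(a\<^sup>2 + b\<^sup>2)"
    using ab assms by (intro add_mono mult_left_mono mult_right_mono) auto
  finally show ?thesis by (simp add: algebra_simps)
qed

lemma deriv_nonpos_if_le_on_right:
  fixes f :: "real \<Rightarrow> real"
  assumes "(f has_real_derivative D) (at a)" and "0 < \<epsilon>"
    and "\<And>s. a < s \<Longrightarrow> s < a + \<epsilon> \<Longrightarrow> f s \<le> f a"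
  shows "D \<le> 0"
proof (rule ccontr)
  assume "\<not> D \<le> 0"
  then obtain d where "0 < d" and inc: "\<And>h. 0 < h \<Longrightarrow> h < d \<Longrightarrow> f a < f (a + h)"
    using DERIV_pos_inc_right[OF assms(1)] by force
  define h where "h = min d \<epsilon> / 2"
  have "0 < h" "h < d" "h < \<epsilon>" using \<open>0 < d\<close> \<open>0 < \<epsilon>\<close> by (auto simp: h_def)
  then show False using inc[of h] assms(3)[of "a + h"] by auto
qed

lemma deriv_nonneg_if_le_on_left:
  fixes f :: "real \<Rightarrow> real"
  assumes "(f has_real_derivative D) (at a)" and "0 < \<epsilon>"
    and "\<And>s. a - \<epsilon> < s \<Longrightarrow> s < a \<Longrightarrow> f s \<le> f a"
  shows "0 \<le> D"
proof (rule ccontr)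
  assume "\<not> 0 \<le> D"
  then obtain d where "0 < d" and dec: "\<And>h. 0 < h \<Longrightarrow> h < d \<Longrightarrow> f a < f (a - h)"
    using DERIV_neg_dec_left[OF assms(1)] by force
  define h where "h = min d \<epsilon> / 2"
  have "0 < h" "h < d" "h < \<epsilon>" using \<open>0 < d\<close> \<open>0 < \<epsilon>\<close> by (auto simp: h_def)
  then show False using dec[of h] assms(3)[of "a - h"] by auto
qed

lemma first_hitting_time:
  fixes f :: "real \<Rightarrow> real"
  assumes "a \<le> b" and cont: "continuous_on {a..b} f" and "f a < c" and "c \<le> f b"
  obtains t where "a < t" "t \<le> b" "f t = c" "\<And>s. a \<le> s \<Longrightarrow> s < t \<Longrightarrow> f s < c"
proof -
  have hit: "\<exists>r. a \<le> r \<and> r \<le> s \<and> f r = c" if "a \<le> s" "s \<le> b" "c \<le> f s" for s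
    using IVT'[OF less_imp_le[OF \<open>f a < c\<close>] \<open>c \<le> f s\<close> \<open>a \<le> s\<close>] continuous_on_subset[OF cont] that
    by simp
  define S where "S = {a..b} \<inter> f -` {c}"
  have "S \<noteq> {}"
    using hit[OF \<open>a \<le> b\<close> order.refl \<open>c \<le> f b\<close>] by (auto simp: S_def)
  moreover have "bdd_below S"
    unfolding S_def by (rule bdd_belowI[of _ a]) auto
  moreover have "closed S"
    unfolding S_def by (intro continuous_closed_preimage cont) auto
  ultimately have "Inf S \<in> S" by (rule closed_contains_Inf)
  then have "a \<le> Inf S" "Inf S \<le> b" "f (Inf S) = c" by (auto simp: S_def)
  have below: "f s < c" if s: "a \<le> s" "s < Inf S" for s
  proof (rule ccontr)
    assume "\<not> f s < c"
    moreover have "s \<le> b" using s \<open>Inf S \<le> b\<close> by simp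
    ultimately obtain r where "a \<le> r" "r \<le> s" "f r = c"
      using hit[of s] s by auto
    then have "r \<in> S" using \<open>s \<le> b\<close> by (auto simp: S_def)
    then show False using cInf_lower[OF _ \<open>bdd_below S\<close>, of r] \<open>r \<le> s\<close> s by simp
  qed
  have "a < Inf S"
    using \<open>a \<le> Inf S\<close> \<open>f (Inf S) = c\<close> \<open>f a < c\<close> by (cases "a = Inf S") auto
  from that[OF this \<open>Inf S \<le> b\<close> \<open>f (Inf S) = c\<close> below] show ?thesis .
qed

lemma S2_traj_is_interval: "S2_traj N m p \<sigma> I x y z \<Longrightarrow> is_interval I"
  by (simp add: S2_traj_def)

lemma S2_traj_z_nonneg: "S2_traj N m p \<sigma> I x y z \<Longrightarrow> t \<in> I \<Longrightarrow> 0 \<le> z t"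
  by (simp add: S2_traj_def)

locale S2_critical_plane =
  fixes N :: nat and m p \<sigma> Y0 Z0 :: real
  assumes m_less_p: "m < p" and \<sigma>_gt: "- 2 < \<sigma>"
    and Y0_eq: "Y0 = - (\<sigma> + 2) / (p - m)"
    and Z0_eq: "Z0 = (real N - 2) * Y0 + m * Y0\<^sup>2"
begin

lemma p_minus_m_times_Y0: "(p - m) * Y0 = - (\<sigma> + 2)"
  using m_less_p by (simp add: Y0_eq)

lemma S2_traj_deriv_y:
  assumes "S2_traj N m p \<sigma> I x y z" and "t \<in> I"
  shows "(y has_real_derivative
           (z t - Z0) - (y t - Y0) * ((p - m) / (\<sigma> + 2) * x t + (real N - 2) + m * (y t + Y0)))
         (at t)"
proof -
  define c where "c = (p - m) / (\<sigma> + 2)"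
  have "1 + c * Y0 = 0"
    using p_minus_m_times_Y0 \<sigma>_gt by (simp add: c_def field_simps)
  moreover have "(- x t - (real N - 2) * y t + z t - m * (y t)\<^sup>2 - c * x t * y t)
      - ((z t - Z0) - (y t - Y0) * (c * x t + (real N - 2) + m * (y t + Y0)))
      = - x t * (1 + c * Y0)"
    by (simp add: Z0_eq algebra_simps power2_eq_square)
  ultimately have field_eq: "- x t - (real N - 2) * y t + z t - m * (y t)\<^sup>2 - c * x t * y t
      = (z t - Z0) - (y t - Y0) * (c * x t + (real N - 2) + m * (y t + Y0))"
    by simp
  have "(y has_real_derivative
      - x t - (real N - 2) * y t + z t - m * (y t)\<^sup>2 - c * x t * y t) (at t)"
    using assms unfolding S2_traj_def c_def by blast
  then show ?thesis unfolding field_eq unfolding c_def .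
qed

lemma S2_traj_deriv_z:
  assumes "S2_traj N m p \<sigma> I x y z" and "t \<in> I"
  shows "(z has_real_derivative (p - m) * z t * (y t - Y0)) (at t)"
proof -
  have "\<sigma> + 2 + (p - m) * y t = (p - m) * (y t - Y0)"
    using p_minus_m_times_Y0 by (simp add: algebra_simps)
  moreover have "(z has_real_derivative z t * (\<sigma> + 2 + (p - m) * y t)) (at t)"
    using assms unfolding S2_traj_def by blast
  ultimately show ?thesis by (simp add: ac_simps)
qed

lemma tangency_imp_invariant_line:
  assumes traj: "S2_traj N m p \<sigma> I x y z" and "\<eta> \<in> I" and "y \<eta> = Y0"
    and "deriv y \<eta> = 0" and "t \<in> I"
  shows "y t = Y0 \<and> z t = Z0"
proof -
  define K where "K s = (p - m) / (\<sigma> + 2) * x s + (real N - 2) + m * (y s + Y0)" for s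
  have dy: "(y has_real_derivative (z s - Z0) - (y s - Y0) * K s) (at s)" if "s \<in> I" for s
    using S2_traj_deriv_y[OF traj that] unfolding K_def .
  have dz: "(z has_real_derivative (p - m) * z s * (y s - Y0)) (at s)" if "s \<in> I" for s
    using S2_traj_deriv_z[OF traj that] .
  have "z \<eta> = Z0"
    using DERIV_imp_deriv[OF dy[OF \<open>\<eta> \<in> I\<close>]] \<open>deriv y \<eta> = 0\<close> \<open>y \<eta> = Y0\<close> by simp
  define V where "V s = (y s - Y0)\<^sup>2 + (z s - Z0)\<^sup>2" for s
  define V' where "V' s = 2 * (y s - Y0) * ((z s - Z0) - (y s - Y0) * K s)
    + 2 * (z s - Z0) * ((p - m) * z s * (y s - Y0))" for s
  define L where "L s = 1 + (p - m) * z s + 2 * \<bar>K s\<bar>" for s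
  have "V t = 0"
  proof (rule gronwall_zero_on_interval[where V = V and V' = V' and L = L and \<eta> = \<eta>])
    show "is_interval I" using S2_traj_is_interval[OF traj] .
    show "\<eta> \<in> I" "t \<in> I" by fact+
    show "V \<eta> = 0" using \<open>y \<eta> = Y0\<close> \<open>z \<eta> = Z0\<close> by (simp add: V_def)
    show "0 \<le> V s" for s by (simp add: V_def)
  next
    fix s assume "s \<in> I"
    then have "0 \<le> (p - m) * z s" using S2_traj_z_nonneg[OF traj] m_less_p by simp
    show "(V has_real_derivative V' s) (at s)"
      unfolding V_def V'_def using dy[OF \<open>s \<in> I\<close>] dz[OF \<open>s \<in> I\<close>]
      by (auto intro!: derivative_eq_intros simp: algebra_simps)
    show "\<bar>V' s\<bar> \<le> L s * V s"
      using abs_cross_terms_le[OF \<open>0 \<le> (p - m) * z s\<close>, of "y s - Y0" "z s - Z0" "K s"]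
      by (simp add: L_def V_def V'_def algebra_simps power2_eq_square)
  next
    have "continuous_on I x"
      by (rule has_real_derivative_imp_continuous_on) (use traj in \<open>auto simp: S2_traj_def\<close>)
    moreover have "continuous_on I y"
      by (rule has_real_derivative_imp_continuous_on, rule dy)
    moreover have "continuous_on I z"
      by (rule has_real_derivative_imp_continuous_on, rule dz)
    ultimately show "continuous_on I L"
      unfolding L_def K_def by (intro continuous_intros)
  qed
  then show ?thesis by (simp add: V_def)
qed

lemma downward_crossing_stays_below:
  assumes traj: "S2_traj N m p \<sigma> I x y z" and "\<eta> \<in> I" and "y \<eta> = Y0" and "0 < \<epsilon>"
    and right: "\<And>s. \<eta> < s \<Longrightarrow> s < \<eta> + \<epsilon> \<Longrightarrow> s \<in> I \<and> y s < Y0"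
    and "t \<in> I" and "\<eta> < t"
  shows "y t < Y0"
proof (rule ccontr)
  assume "\<not> y t < Y0"
  have dy_plane: "(y has_real_derivative z s - Z0) (at s)" if "s \<in> I" "y s = Y0" for s
    using S2_traj_deriv_y[OF traj \<open>s \<in> I\<close>] \<open>y s = Y0\<close> by simp
  have "z \<eta> - Z0 \<le> 0"
    by (rule deriv_nonpos_if_le_on_right[OF dy_plane[OF \<open>\<eta> \<in> I\<close> \<open>y \<eta> = Y0\<close>] \<open>0 < \<epsilon>\<close>])
      (auto dest!: right simp: \<open>y \<eta> = Y0\<close>)
  define a where "a = \<eta> + \<epsilon> / 2"
  have "a \<in> I" "y a < Y0" using right[of a] \<open>0 < \<epsilon>\<close> by (auto simp: a_def)
  have "\<eta> + \<epsilon> \<le> t" using right[of t] \<open>\<not> y t < Y0\<close> \<open>\<eta> < t\<close> by force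
  then have "a < t" using \<open>0 < \<epsilon>\<close> by (simp add: a_def)
  have in_I: "s \<in> I" if "\<eta> \<le> s" "s \<le> t" for s
    by (rule mem_is_interval_1_I[OF S2_traj_is_interval[OF traj] \<open>\<eta> \<in> I\<close> \<open>t \<in> I\<close> that])
  have "continuous_on {a..t} y"
    by (rule has_real_derivative_imp_continuous_on, rule S2_traj_deriv_y[OF traj])
      (use in_I \<open>0 < \<epsilon>\<close> in \<open>auto simp: a_def\<close>)
  moreover have "a \<le> t" "Y0 \<le> y t" using \<open>a < t\<close> \<open>\<not> y t < Y0\<close> by simp_all
  ultimately obtain t2 where "a < t2" "t2 \<le> t" "y t2 = Y0"
    and before: "\<And>s. a \<le> s \<Longrightarrow> s < t2 \<Longrightarrow> y s < Y0"
    using first_hitting_time[of a t y Y0] \<open>y a < Y0\<close> by blast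
  have "\<eta> < t2" using \<open>a < t2\<close> \<open>0 < \<epsilon>\<close> by (simp add: a_def)
  have "t2 \<in> I" using in_I \<open>\<eta> < t2\<close> \<open>t2 \<le> t\<close> by simp
  have below: "y s < Y0" if "\<eta> < s" "s < t2" for s
    using right[of s] before[of s] that by (cases "s < a") (auto simp: a_def)
  have "z t2 \<le> z \<eta>"
  proof (rule DERIV_nonpos_imp_nonincreasing[of \<eta> t2 z])
    fix s assume "\<eta> \<le> s" "s \<le> t2"
    then have "s \<in> I" "y s \<le> Y0"
      using in_I below[of s] \<open>t2 \<le> t\<close> \<open>y \<eta> = Y0\<close> \<open>y t2 = Y0\<close> by (auto simp: order.order_iff_strict)
    then have "(p - m) * z s * (y s - Y0) \<le> 0"
      using S2_traj_z_nonneg[OF traj \<open>s \<in> I\<close>] m_less_p by (intro mult_nonneg_nonpos) auto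
    then show "\<exists>D. (z has_real_derivative D) (at s) \<and> D \<le> 0"
      using S2_traj_deriv_z[OF traj \<open>s \<in> I\<close>] by blast
  qed (use \<open>\<eta> < t2\<close> in simp)
  moreover have "0 \<le> z t2 - Z0"
    by (rule deriv_nonneg_if_le_on_left[OF dy_plane[OF \<open>t2 \<in> I\<close> \<open>y t2 = Y0\<close>], of "t2 - \<eta>"])
      (use below \<open>\<eta> < t2\<close> \<open>y t2 = Y0\<close> in \<open>auto intro: less_imp_le\<close>)
  ultimately have "deriv y t2 = 0"
    using \<open>z \<eta> - Z0 \<le> 0\<close> DERIV_imp_deriv[OF dy_plane[OF \<open>t2 \<in> I\<close> \<open>y t2 = Y0\<close>]] by simp
  then have "y a = Y0"
    using tangency_imp_invariant_line[OF traj \<open>t2 \<in> I\<close> \<open>y t2 = Y0\<close> _ \<open>a \<in> I\<close>] by simp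
  then show False using \<open>y a < Y0\<close> by simp
qed

end

theorem lemma5p2:
  fixes N :: nat and m p \<sigma> :: real
  assumes N: "N \<ge> 1" and m: "m > 1" and \<sigma>: "\<sigma> > 0"
    and p: "m < p" "p < m + (\<sigma> + 2) / real N"
  defines "Y0 \<equiv> - (\<sigma> + 2) / (p - m)"
    and "Z0 \<equiv> (\<sigma> + 2) * (m * (real N + \<sigma>) - p * (real N - 2)) / (p - m)\<^sup>2"
  shows
    "(\<forall>I x y z \<eta>1. S2_traj N m p \<sigma> I x y z \<and> \<eta>1 \<in> I \<and> y \<eta>1 = Y0 \<and>
        (\<exists>\<epsilon>>0. (\<forall>t. \<eta>1 - \<epsilon> < t \<and> t < \<eta>1 \<longrightarrow> t \<in> I \<and> y t > Y0) \<and>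
                 (\<forall>t. \<eta>1 < t \<and> t < \<eta>1 + \<epsilon> \<longrightarrow> t \<in> I \<and> y t < Y0))
      \<longrightarrow> (\<forall>t\<in>I. t > \<eta>1 \<longrightarrow> y t < Y0))
   \<and> (\<forall>I x y z \<eta>. S2_traj N m p \<sigma> I x y z \<and> \<eta> \<in> I \<and> y \<eta> = Y0 \<and> deriv y \<eta> = 0
      \<longrightarrow> (\<forall>t\<in>I. y t = Y0 \<and> z t = Z0))"
proof -
  have key: "u * (m * u - n * d) / d\<^sup>2 = n * (- u / d) + m * (- u / d)\<^sup>2" if "d \<noteq> 0"
    for u n d :: real
    using that by (simp add: field_simps power2_eq_square)
  have "m * (real N + \<sigma>) - p * (real N - 2) = m * (\<sigma> + 2) - (real N - 2) * (p - m)"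
    by (simp add: algebra_simps)
  then have Z0_eq: "Z0 = (real N - 2) * Y0 + m * Y0\<^sup>2"
    unfolding Z0_def Y0_def using key[of "p - m" "\<sigma> + 2"] p(1) by simp
  interpret S2_critical_plane N m p \<sigma> Y0 Z0
    using p(1) \<sigma> Z0_eq by unfold_locales (simp_all add: Y0_def)
  show ?thesis
    using downward_crossing_stays_below tangency_imp_invariant_line by blast
qed

end
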